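(* Fix an observation sequence $\{s_t,a_t\}_{t\in\mathbb Z}$, integers $t_1\le t_2$, $\mathbb I=[t_1:t_2]$, and $\theta,\hat\theta\in\Theta$ (possibly equal). Let $\{\varphi^\theta_t\}_{t\in\mathbb I},\{\hat\varphi^{\hat\theta}_t\}_{t\in\mathbb I},\{\rho^\theta_t\}_{t\in\mathbb I},\{\hat\rho^{\hat\theta}_t\}_{t\in\mathbb I}$ be strictly positive probability measures on $\mathcal O\times\{0,1\}$ such that $F^\theta_t\varphi^\theta_{t-1}=\varphi^\theta_t$ and $F^{\hat\theta}_t\hat\varphi^{\hat\theta}_{t-1}=\hat\varphi^{\hat\theta}_t$ for $t\in\mathbb I$, $t\ne t_1$, and $B^\theta_t\rho^\theta_{t+1}=\rho^\theta_t$ and $B^{\hat\theta}_t\hat\rho^{\hat\theta}_{t+1}=\hat\rho^{\hat\theta}_t$ for $t\in\mathbb I$, $t\ne t_2$. Then $$\big\|(\varphi^\theta\otimes\rho^\theta)_{t_2}-(\hat\varphi^{\hat\theta}\otimes\rho^\theta)_{t_2}\big\|_{TV}\le\Big(1-\frac{\epsilon_b^2\zeta}{|\mathcal O|}\Big)^{t_2-t_1}+\frac{|\mathcal O|\,z_{\theta,\hat\theta}\,L_{\theta,\|\hat\theta-\theta\|_2}}{\epsilon_b^2\zeta}\|\hat\theta-\theta\|_2,$$ $$\big\|(\hat\varphi^{\hat\theta}\otimes\rho^\theta)_{t_1}-(\hat\varphi^{\hat\theta}\otimes\hat\rho^{\hat\theta})_{t_1}\big\|_{TV}\le\Big(1-\frac{\epsilon_b^2\zeta}{|\mathcal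 O|}\Big)^{t_2-t_1}+\frac{|\mathcal O|\,z_{\theta,\hat\theta}\,L_{\theta,\|\hat\theta-\theta\|_2}}{\epsilon_b^2\zeta}\|\hat\theta-\theta\|_2.$$
   Context: $\mathcal S,\mathcal A,\mathcal O$ are finite sets; $\Theta=\Theta_{hi}\times\Theta_{lo}\times\Theta_b$ is a convex compact subset of a Euclidean space. There are policies $\pi_{hi}(o\mid s;\theta_{hi})$ (distribution on $\mathcal O$), $\pi_{lo}(a\mid s,o;\theta_{lo})$ (distribution on $\mathcal A$), $\pi_b(b\mid s,o';\theta_b)$ (distribution on $\{0,1\}$); standing assumption: on an open set $\tilde\Theta\supseteq\Theta$ they are defined, strictly positive and continuously differentiable in $\theta$. For fixed $\zeta\in(0,1)$, $\bar\pi_{hi}(o_t\mid s_t,o_{t-1},b_t;\theta_{hi})$ equals $\pi_{hi}(o_t\mid s_t;\theta_{hi})$ if $b_t=1$, $1-\zeta+\zeta/|\mathcal O|$ if $b_t=0,o_t=o_{t-1}$, $\zeta/|\mathcal O|$ if $b_t=0,o_t\ne o_{t-1}$. Let $\epsilon_b>0$ be a constant for which there is a conditional distribution $\bar\pi_{o,b}(o_t,b_t\mid s_t;\theta)$ on $\mathcal O\times\{0,1\}$ with $0<\epsilon_b\zeta\bar\pi_{o,b}(o_t,b_t\mid s_t;\theta)\le\pi_b(b_t\mid s_t,o_{t-1};\theta_b)\bar\pi_{hi}(o_t\mid s_t,o_{t-1},b_t;\theta_{hi})\le\epsilon_b^{-1}|\mathcal O|\bar\pi_{o,b}(o_t,b_t\mid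 s_t;\theta)$ for all $\theta\in\Theta$ and all arguments (such $\epsilon_b$ exists). Define $h(\theta;o_{t-1},s_t,a_t,o_t,b_t)=\pi_b(b_t\mid s_t,o_{t-1};\theta_b)\bar\pi_{hi}(o_t\mid s_t,o_{t-1},b_t;\theta_{hi})\pi_{lo}(a_t\mid s_t,o_t;\theta_{lo})$. For $\theta\in\Theta,\delta>0$, $L_{\theta,\delta}$ is the smallest $L$ such that for all arguments, $\tilde\theta\mapsto h(\tilde\theta;\cdot)$ is $L$-Lipschitz on $\{\tilde\theta\in\Theta:\|\tilde\theta-\theta\|_2\le\delta\}$. Let $z_{\theta,\hat\theta}=\max_{s',a'}\frac{[\max_{o_{t-1},o_t,b_t}h(\theta;o_{t-1},s',a',o_t,b_t)]\vee[\max_{o_{t-1},o_t,b_t}h(\hat\theta;o_{t-1},s',a',o_t,b_t)]}{[\min_{o_{t-1},o_t,b_t}h(\theta;o_{t-1},s',a',o_t,b_t)][\min_{o_{t-1},o_t,b_t}h(\hat\theta;o_{t-1},s',a',o_t,b_t)]}$. Given the observation sequence, for probability measures $\varphi,\rho$ on $\mathcal O\times\{0,1\}$: the forward operator $F^\theta_t\varphi(o_t,b_t)\propto\sum_{o_{t-1},b_{t-1}}h(\theta;o_{t-1},s_t,a_t,o_t,b_t)\varphi(o_{t-1},b_{t-1})$ and backward operator $B^\theta_t\rho(o_t,b_t)\propto\sum_{o_{t+1},b_{t+1}}h(\theta;o_t,s_{t+1},a_{t+1},o_{t+1},b_{t+1})\rho(o_{t+1},b_{t+1})$ (both normalized to probability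 measures). For families $\varphi,\rho$, $(\varphi\otimes\rho)_t(o_t,b_t)\propto\varphi_t(o_t,b_t)\rho_t(o_t,b_t)$ (normalized). $\|\nu_1-\nu_2\|_{TV}=\frac12\sum|\nu_1-\nu_2|$. *)

theory Defs
  imports "HOL-Analysis.Analysis"
begin

text \<open>Parameters theta = (theta_hi, theta_lo, theta_b) live in a product of Euclidean
  spaces; the norm on the product type is the Euclidean 2-norm.  The termination
  variable b in {0,1} is modelled by bool (True = 1).\<close>

type_synonym ('h,'l,'b) param = "'h \<times> 'l \<times> 'b"

text \<open>Policies: pihi o s th_hi = pi_hi(o|s), pilo a s o th_lo = pi_lo(a|s,o),
  pib b s o' th_b = pi_b(b|s,o').\<close>

definition pibar_hi ::
  "('o::finite \<Rightarrow> 's \<Rightarrow> 'h \<Rightarrow> real) \<Rightarrow> real \<Rightarrow> 'o \<Rightarrow> 's \<Rightarrow> 'o \<Rightarrow> bool \<Rightarrow> 'h \<Rightarrow> real" where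
  "pibar_hi pihi zeta ot st oprev bt th =
     (if bt then pihi ot st th
      else if ot = oprev then 1 - zeta + zeta / real CARD('o)
      else zeta / real CARD('o))"

definition hfun ::
  "('o::finite \<Rightarrow> 's \<Rightarrow> 'h \<Rightarrow> real) \<Rightarrow> ('a \<Rightarrow> 's \<Rightarrow> 'o \<Rightarrow> 'l \<Rightarrow> real) \<Rightarrow>
   (bool \<Rightarrow> 's \<Rightarrow> 'o \<Rightarrow> 'b \<Rightarrow> real) \<Rightarrow> real \<Rightarrow> ('h,'l,'b) param \<Rightarrow>
   'o \<Rightarrow> 's \<Rightarrow> 'a \<Rightarrow> 'o \<Rightarrow> bool \<Rightarrow> real" where
  "hfun pihi pilo pib zeta th oprev st ac ot bt =
     pib bt st oprev (snd (snd th)) * pibar_hi pihi zeta ot st oprev bt (fst th)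
     * pilo ac st ot (fst (snd th))"

definition C1_on :: "('p::euclidean_space) set \<Rightarrow> ('p \<Rightarrow> real) \<Rightarrow> bool" where
  "C1_on T f \<longleftrightarrow> (\<exists>D::'p \<Rightarrow> ('p \<Rightarrow>\<^sub>L real).
      (\<forall>x\<in>T. (f has_derivative blinfun_apply (D x)) (at x)) \<and> continuous_on T D)"

definition Lconst ::
  "('o::finite \<Rightarrow> 's::finite \<Rightarrow> 'h::euclidean_space \<Rightarrow> real) \<Rightarrow>
   ('a::finite \<Rightarrow> 's \<Rightarrow> 'o \<Rightarrow> 'l::euclidean_space \<Rightarrow> real) \<Rightarrow>
   (bool \<Rightarrow> 's \<Rightarrow> 'o \<Rightarrow> 'b::euclidean_space \<Rightarrow> real) \<Rightarrow> real \<Rightarrow>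
   ('h,'l,'b) param set \<Rightarrow> ('h,'l,'b) param \<Rightarrow> real \<Rightarrow> real" where
  "Lconst pihi pilo pib zeta Theta th delta =
     Inf {L. \<forall>oprev st ac ot bt.
        L-lipschitz_on {th'\<in>Theta. norm (th' - th) \<le> delta}
          (\<lambda>th'. hfun pihi pilo pib zeta th' oprev st ac ot bt)}"

definition hmax where
  "hmax pihi pilo pib zeta th st ac =
     Max (range (\<lambda>(oprev, ot, bt). hfun pihi pilo pib zeta th oprev st ac ot bt))"

definition hmin where
  "hmin pihi pilo pib zeta th st ac =
     Min (range (\<lambda>(oprev, ot, bt). hfun pihi pilo pib zeta th oprev st ac ot bt))"

definition zconst ::
  "('o::finite \<Rightarrow> 's::finite \<Rightarrow> 'h \<Rightarrow> real) \<Rightarrow> ('a::finite \<Rightarrow> 's \<Rightarrow> 'o \<Rightarrow> 'l \<Rightarrow> real) \<Rightarrow>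
   (bool \<Rightarrow> 's \<Rightarrow> 'o \<Rightarrow> 'b \<Rightarrow> real) \<Rightarrow> real \<Rightarrow> ('h,'l,'b) param \<Rightarrow> ('h,'l,'b) param \<Rightarrow> real" where
  "zconst pihi pilo pib zeta th th' =
     Max (range (\<lambda>(st, ac).
       max (hmax pihi pilo pib zeta th st ac) (hmax pihi pilo pib zeta th' st ac)
       / (hmin pihi pilo pib zeta th st ac * hmin pihi pilo pib zeta th' st ac)))"

text \<open>Probability measures on O x {0,1} are functions to the reals.\<close>
definition normalize :: "('x::finite \<Rightarrow> real) \<Rightarrow> 'x \<Rightarrow> real" where
  "normalize f = (\<lambda>x. f x / (\<Sum>y\<in>UNIV. f y))"

definition is_prob :: "('x::finite \<Rightarrow> real) \<Rightarrow> bool" where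
  "is_prob f \<longleftrightarrow> (\<forall>x. 0 \<le> f x) \<and> (\<Sum>x\<in>UNIV. f x) = 1"

definition pos_prob :: "('x::finite \<Rightarrow> real) \<Rightarrow> bool" where
  "pos_prob f \<longleftrightarrow> (\<forall>x. 0 < f x) \<and> (\<Sum>x\<in>UNIV. f x) = 1"

definition fwd where
  "fwd pihi pilo pib zeta (s :: int \<Rightarrow> 's) (a :: int \<Rightarrow> 'a) th t
     (phi :: 'o::finite \<times> bool \<Rightarrow> real) =
     normalize (\<lambda>(ot, bt). \<Sum>(oprev, bprev)\<in>UNIV.
        hfun pihi pilo pib zeta th oprev (s t) (a t) ot bt * phi (oprev, bprev))"

definition bwd where
  "bwd pihi pilo pib zeta (s :: int \<Rightarrow> 's) (a :: int \<Rightarrow> 'a) th t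
     (rho :: 'o::finite \<times> bool \<Rightarrow> real) =
     normalize (\<lambda>(ot, bt). \<Sum>(onext, bnext)\<in>UNIV.
        hfun pihi pilo pib zeta th ot (s (t+1)) (a (t+1)) onext bnext * rho (onext, bnext))"

definition otimes :: "('x::finite \<Rightarrow> real) \<Rightarrow> ('x \<Rightarrow> real) \<Rightarrow> 'x \<Rightarrow> real" where
  "otimes phi rho = normalize (\<lambda>x. phi x * rho x)"

definition tv_dist :: "('x::finite \<Rightarrow> real) \<Rightarrow> ('x \<Rightarrow> real) \<Rightarrow> real" where
  "tv_dist nu1 nu2 = (1/2) * (\<Sum>x\<in>UNIV. \<bar>nu1 x - nu2 x\<bar>)"

end

theory Submission
  imports Defs
begin

text \<open>Both filters are normalized kernel steps phi_t = normalize (phi_(t-1) Q_t) with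
  Q_t (y, x) = h(theta; y, s_t, a_t, x); the backward filter is such a recursion in reversed time
  with the transposed kernel.  The hypothesis on eps_b makes Q_t comparable to a product
  u(y) v(x), with constants eps_b zeta and |O| / eps_b.  Hence, after tilting by any positive weight,
  the Doob transform of Q_t is minorized with constant eps_b^2 zeta / |O|, and by Dobrushin's bound
  every step contracts total variation by the factor 1 - eps_b^2 zeta / |O|.  Replacing theta by
  theta' changes every kernel entry by a relative error of at most z L ||theta' - theta||
  (L bounds the change of h, z bounds 1 / h); every step adds at most this error, and the
  geometric series multiplies it by |O| / (eps_b^2 zeta).\<close>

section \<open>Normalized filters on a finite state space\<close>

definition filter_step :: "('x::finite \<Rightarrow> 'x \<Rightarrow> real) \<Rightarrow> ('x \<Rightarrow> real) \<Rightarrow> 'x \<Rightarrow> real" where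
  "filter_step Q mu = normalize (\<lambda>x. \<Sum>y\<in>UNIV. mu y * Q y x)"

definition kernel_apply :: "('x::finite \<Rightarrow> 'x \<Rightarrow> real) \<Rightarrow> ('x \<Rightarrow> real) \<Rightarrow> 'x \<Rightarrow> real" where
  "kernel_apply Q w = (\<lambda>y. \<Sum>x\<in>UNIV. Q y x * w x)"

definition doob_transform :: "('x::finite \<Rightarrow> 'x \<Rightarrow> real) \<Rightarrow> ('x \<Rightarrow> real) \<Rightarrow> 'x \<Rightarrow> 'x \<Rightarrow> real" where
  "doob_transform Q w = (\<lambda>y x. Q y x * w x / kernel_apply Q w y)"

definition doeblin_bounds :: "real \<Rightarrow> real \<Rightarrow> ('x \<Rightarrow> 'x \<Rightarrow> real) \<Rightarrow> bool" where
  "doeblin_bounds c1 c2 Q \<longleftrightarrow> (\<exists>u v. (\<forall>y. 0 < u y) \<and> (\<forall>x. 0 < v x) \<and>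
     (\<forall>y x. c1 * u y * v x \<le> Q y x \<and> Q y x \<le> c2 * u y * v x))"

lemma sum_pos_UNIV: "(\<And>x. 0 < f x) \<Longrightarrow> 0 < sum (f :: 'x::finite \<Rightarrow> real) UNIV"
  by (rule sum_pos) auto

lemma sum_normalize_eq_1: "sum f UNIV \<noteq> 0 \<Longrightarrow> sum (normalize f) UNIV = 1"
  unfolding normalize_def by (simp add: sum_divide_distrib[symmetric])

lemma normalize_cmult: "(c::real) \<noteq> 0 \<Longrightarrow> normalize (\<lambda>x. c * f x) = normalize f"
  unfolding normalize_def by (auto simp: sum_distrib_left[symmetric])

lemma otimes_commute: "otimes f g = otimes g f"
  unfolding otimes_def by (simp add: mult.commute)

lemma is_prob_otimes:
  assumes "\<And>x. 0 < f x" "\<And>x. 0 < w x"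
  shows "is_prob (otimes f w)"
proof -
  have "0 < sum (\<lambda>x. f x * w x) UNIV"
    using assms by (intro sum_pos_UNIV) auto
  then show ?thesis
    using sum_normalize_eq_1[of "\<lambda>x. f x * w x"] assms
    by (auto simp: is_prob_def otimes_def normalize_def less_imp_le)
qed

lemma otimes_filter_step:
  assumes "(\<Sum>x\<in>UNIV. \<Sum>y\<in>UNIV. mu y * Q y x) \<noteq> 0"
  shows "otimes (filter_step Q mu) w = normalize (\<lambda>x. (\<Sum>y\<in>UNIV. mu y * Q y x) * w x)"
proof -
  let ?S = "\<Sum>x\<in>UNIV. \<Sum>y\<in>UNIV. mu y * Q y x"
  have "otimes (filter_step Q mu) w = normalize (\<lambda>x. (1 / ?S) * ((\<Sum>y\<in>UNIV. mu y * Q y x) * w x))"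
    by (simp add: otimes_def filter_step_def normalize_def)
  also have "\<dots> = normalize (\<lambda>x. (\<Sum>y\<in>UNIV. mu y * Q y x) * w x)"
    using assms by (intro normalize_cmult) simp
  finally show ?thesis .
qed

lemma tv_dist_triangle: "tv_dist a c \<le> tv_dist a b + tv_dist b c"
proof -
  have "(\<Sum>x\<in>UNIV. \<bar>a x - c x\<bar>) \<le> (\<Sum>x\<in>UNIV. \<bar>a x - b x\<bar> + \<bar>b x - c x\<bar>)"
    by (rule sum_mono) linarith
  then show ?thesis
    unfolding tv_dist_def by (simp add: sum.distrib)
qed

lemma tv_dist_le_one:
  assumes "is_prob a" "is_prob b"
  shows "tv_dist a b \<le> 1"
proof -
  have "(\<Sum>x\<in>UNIV. \<bar>a x - b x\<bar>) \<le> (\<Sum>x\<in>UNIV. a x + b x)"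
    using assms by (intro sum_mono) (auto simp: is_prob_def abs_le_iff)
  then show ?thesis
    using assms unfolding tv_dist_def is_prob_def by (simp add: sum.distrib)
qed

text \<open>The pointwise errors and the error of the normalizing constant each contribute at
  most r/2.\<close>

lemma tv_dist_normalize_le:
  fixes A A' :: "'x::finite \<Rightarrow> real"
  assumes A: "\<And>x. 0 < A x" and A': "\<And>x. 0 < A' x"
    and close: "\<And>x. \<bar>A' x - A x\<bar> \<le> r * A x"
  shows "tv_dist (normalize A) (normalize A') \<le> r"
proof -
  define S S' where "S = sum A UNIV" and "S' = sum A' UNIV"
  have S: "0 < S" and S': "0 < S'"
    unfolding S_def S'_def using A A' by (auto intro: sum_pos_UNIV)
  have split: "normalize A x - normalize A' x = (A x - A' x) / S + A' x * (S' - S) / (S * S')" for x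
    using S S' unfolding normalize_def S_def[symmetric] S'_def[symmetric] by (simp add: field_simps)
  have pointwise: "(\<Sum>x\<in>UNIV. \<bar>A x - A' x\<bar>) \<le> r * S"
    unfolding S_def sum_distrib_left using close by (intro sum_mono) (simp add: abs_minus_commute)
  have "\<bar>S' - S\<bar> = \<bar>\<Sum>x\<in>UNIV. A x - A' x\<bar>"
    unfolding S_def S'_def by (simp add: sum_subtractf abs_minus_commute)
  also have "\<dots> \<le> (\<Sum>x\<in>UNIV. \<bar>A x - A' x\<bar>)"
    by (rule sum_abs)
  finally have total: "\<bar>S' - S\<bar> \<le> r * S"
    using pointwise by linarith
  have "(\<Sum>x\<in>UNIV. \<bar>normalize A x - normalize A' x\<bar>)
      \<le> (\<Sum>x\<in>UNIV. \<bar>A x - A' x\<bar> / S + A' x * \<bar>S' - S\<bar> / (S * S'))"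
    unfolding split using S S' A'
    by (intro sum_mono order_trans[OF abs_triangle_ineq])
      (simp add: abs_mult less_imp_le)
  also have "\<dots> = (\<Sum>x\<in>UNIV. \<bar>A x - A' x\<bar>) / S + \<bar>S' - S\<bar> / S"
    using S S' by (simp add: sum.distrib sum_divide_distrib[symmetric]
        sum_distrib_right[symmetric] S'_def[symmetric])
  also have "\<dots> \<le> r + r"
    using pointwise total S by (intro add_mono) (simp_all add: divide_le_eq)
  finally show ?thesis
    unfolding tv_dist_def by simp
qed

lemma tv_dist_kernel_contraction:
  fixes mu nu lam :: "'x::finite \<Rightarrow> real" and K :: "'x \<Rightarrow> 'x \<Rightarrow> real"
  assumes mu: "sum mu UNIV = 1" and nu: "sum nu UNIV = 1"
    and stochastic: "\<And>y. sum (K y) UNIV = 1"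
    and minorized: "\<And>y x. k * lam x \<le> K y x" and lam: "sum lam UNIV = 1"
  shows "tv_dist (\<lambda>x. \<Sum>y\<in>UNIV. mu y * K y x) (\<lambda>x. \<Sum>y\<in>UNIV. nu y * K y x)
      \<le> (1 - k) * tv_dist mu nu"
proof -
  define d where "d y = mu y - nu y" for y
  have d0: "sum d UNIV = 0"
    unfolding d_def using mu nu by (simp add: sum_subtractf)
  \<comment> \<open>since d has total mass 0, the common part k * lam of the rows of K cancels\<close>
  have diff: "(\<Sum>y\<in>UNIV. mu y * K y x) - (\<Sum>y\<in>UNIV. nu y * K y x)
      = (\<Sum>y\<in>UNIV. d y * (K y x - k * lam x))" for x
  proof -
    have "(\<Sum>y\<in>UNIV. d y * (K y x - k * lam x))
        = (\<Sum>y\<in>UNIV. d y * K y x) - (\<Sum>y\<in>UNIV. d y) * (k * lam x)"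
      by (simp add: right_diff_distrib sum_subtractf sum_distrib_right)
    then show ?thesis
      using d0 unfolding d_def by (simp add: algebra_simps sum_subtractf)
  qed
  have "(\<Sum>x\<in>UNIV. \<bar>(\<Sum>y\<in>UNIV. mu y * K y x) - (\<Sum>y\<in>UNIV. nu y * K y x)\<bar>)
      \<le> (\<Sum>x\<in>UNIV. \<Sum>y\<in>UNIV. \<bar>d y\<bar> * (K y x - k * lam x))"
    unfolding diff using minorized
    by (intro sum_mono order_trans[OF sum_abs] eq_refl sum.cong) (auto simp: abs_mult)
  also have "\<dots> = (\<Sum>y\<in>UNIV. \<bar>d y\<bar> * (\<Sum>x\<in>UNIV. K y x - k * lam x))"
    by (subst sum.swap) (simp add: sum_distrib_left)
  also have "\<dots> = (1 - k) * (\<Sum>y\<in>UNIV. \<bar>mu y - nu y\<bar>)"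
    using stochastic lam unfolding d_def
    by (simp add: sum_subtractf sum_distrib_left[symmetric] sum_distrib_right mult.commute)
  finally show ?thesis
    unfolding tv_dist_def by (simp add: mult.left_commute)
qed

lemma doeblin_bounds_pos: "doeblin_bounds c1 c2 Q \<Longrightarrow> 0 < c1 \<Longrightarrow> 0 < Q y x"
  unfolding doeblin_bounds_def by (meson mult_pos_pos order_less_le_trans)

lemma doeblin_bounds_le: "doeblin_bounds c1 c2 Q \<Longrightarrow> c1 \<le> c2"
  unfolding doeblin_bounds_def
  by (metis mult_le_cancel_right_pos order_trans)

lemma doeblin_bounds_transpose: "doeblin_bounds c1 c2 Q \<Longrightarrow> doeblin_bounds c1 c2 (\<lambda>x y. Q y x)"
  unfolding doeblin_bounds_def by (metis mult.assoc mult.commute)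

lemma kernel_apply_pos: "(\<And>y x. 0 < Q y x) \<Longrightarrow> (\<And>x. 0 < w x) \<Longrightarrow> 0 < kernel_apply Q w y"
  unfolding kernel_apply_def by (intro sum_pos_UNIV mult_pos_pos)

lemma doob_transform_stochastic:
  assumes "\<And>y x. 0 < Q y x" "\<And>x. 0 < w x"
  shows "sum (doob_transform Q w y) UNIV = 1"
proof -
  have "0 < kernel_apply Q w y"
    using assms by (rule kernel_apply_pos)
  then show ?thesis
    by (simp add: doob_transform_def sum_divide_distrib[symmetric] kernel_apply_def)
qed

lemma doob_transform_minorized:
  assumes Q: "doeblin_bounds c1 c2 Q" and c1: "0 < c1" and w: "\<And>x. 0 < w x"
  obtains lam where "sum lam UNIV = 1" "\<And>y x. c1 / c2 * lam x \<le> doob_transform Q w y x"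
proof -
  obtain u v where u: "\<And>y. 0 < u y" and v: "\<And>x. 0 < v x"
    and lo: "\<And>y x. c1 * u y * v x \<le> Q y x" and hi: "\<And>y x. Q y x \<le> c2 * u y * v x"
    using Q unfolding doeblin_bounds_def by blast
  have Qpos: "\<And>y x. 0 < Q y x" and c2: "0 < c2"
    using doeblin_bounds_pos[OF Q c1] doeblin_bounds_le[OF Q] c1 by auto
  define V where "V = (\<Sum>x\<in>UNIV. v x * w x)"
  have V: "0 < V"
    unfolding V_def using v w by (intro sum_pos_UNIV mult_pos_pos)
  show ?thesis
  proof
    show "sum (\<lambda>x. v x * w x / V) UNIV = 1"
      using V by (simp add: sum_divide_distrib[symmetric] V_def[symmetric])
  next
    fix y x
    have Qw: "0 < kernel_apply Q w y"
      using Qpos w by (rule kernel_apply_pos)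
    have "kernel_apply Q w y \<le> (\<Sum>x\<in>UNIV. c2 * u y * v x * w x)"
      unfolding kernel_apply_def using hi w by (intro sum_mono mult_right_mono) (auto intro: less_imp_le)
    also have "\<dots> = c2 * u y * V"
      unfolding V_def by (simp add: sum_distrib_left mult.assoc)
    finally have upper: "kernel_apply Q w y \<le> c2 * u y * V" .
    have "c1 / c2 * (v x * w x / V) = c1 * u y * v x * w x / (c2 * u y * V)"
      using u[of y] c2 V by (simp add: field_simps)
    also have "\<dots> \<le> c1 * u y * v x * w x / kernel_apply Q w y"
      using upper Qw c1 u[of y] v[of x] w[of x] by (intro divide_left_mono) auto
    also have "\<dots> \<le> Q y x * w x / kernel_apply Q w y"
      using lo[of y x] w[of x] Qw by (intro divide_right_mono mult_right_mono) auto
    finally show "c1 / c2 * (v x * w x / V) \<le> doob_transform Q w y x"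
      unfolding doob_transform_def .
  qed
qed

text \<open>Tilting by w after a filter step is tilting by the backward-propagated weight before it,
  followed by the Doob transform of Q; this is the stochastic kernel that Dobrushin's bound
  is applied to.\<close>

lemma otimes_filter_step_doob_transform:
  assumes mu: "\<And>x. 0 < mu x" and Q: "\<And>y x. 0 < Q y x" and w: "\<And>x. 0 < w x"
  shows "otimes (filter_step Q mu) w
    = (\<lambda>x. \<Sum>y\<in>UNIV. otimes mu (kernel_apply Q w) y * doob_transform Q w y x)"
proof
  fix x
  let ?w' = "kernel_apply Q w"
  have "0 < ?w' y" for y
    using Q w by (rule kernel_apply_pos)
  then have Qw: "?w' y \<noteq> 0" for y
    by (metis less_irrefl)
  have mass: "(\<Sum>y\<in>UNIV. mu y * ?w' y) = (\<Sum>x\<in>UNIV. (\<Sum>y\<in>UNIV. mu y * Q y x) * w x)"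
    unfolding kernel_apply_def sum_distrib_left sum_distrib_right mult.assoc
    by (rule sum.swap)
  have "(\<Sum>y\<in>UNIV. otimes mu ?w' y * doob_transform Q w y x)
      = (\<Sum>y\<in>UNIV. mu y * Q y x * w x / (\<Sum>y\<in>UNIV. mu y * ?w' y))"
    unfolding otimes_def normalize_def doob_transform_def
    using Qw by (intro sum.cong refl) (simp add: field_simps)
  also have "\<dots> = (\<Sum>y\<in>UNIV. mu y * Q y x) * w x / (\<Sum>y\<in>UNIV. mu y * ?w' y)"
    by (simp add: sum_divide_distrib[symmetric] sum_distrib_right)
  also have "\<dots> = otimes (filter_step Q mu) w x"
    unfolding mass
    by (subst otimes_filter_step) (simp_all add: normalize_def less_imp_neq[symmetric] sum_pos_UNIV mu Q)
  finally show "otimes (filter_step Q mu) w x = (\<Sum>y\<in>UNIV. otimes mu ?w' y * doob_transform Q w y x)" ..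
qed

lemma tv_dist_filter_step_contraction:
  assumes Q: "doeblin_bounds c1 c2 Q" and c1: "0 < c1"
    and mu: "\<And>x. 0 < mu x" and nu: "\<And>x. 0 < nu x" and w: "\<And>x. 0 < w x"
  shows "tv_dist (otimes (filter_step Q mu) w) (otimes (filter_step Q nu) w)
    \<le> (1 - c1 / c2) * tv_dist (otimes mu (kernel_apply Q w)) (otimes nu (kernel_apply Q w))"
proof -
  have Qpos: "\<And>y x. 0 < Q y x"
    using Q c1 by (rule doeblin_bounds_pos)
  obtain lam where lam: "sum lam UNIV = 1" "\<And>y x. c1 / c2 * lam x \<le> doob_transform Q w y x"
    using doob_transform_minorized[where w=w, OF Q c1 w] by blast
  have "0 < kernel_apply Q w y" for y
    using Qpos w by (rule kernel_apply_pos)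
  then have "is_prob (otimes mu (kernel_apply Q w))" "is_prob (otimes nu (kernel_apply Q w))"
    using mu nu by (auto intro: is_prob_otimes)
  then show ?thesis
    unfolding otimes_filter_step_doob_transform[where Q=Q and w=w, OF mu Qpos w]
      otimes_filter_step_doob_transform[where Q=Q and w=w, OF nu Qpos w]
    by (intro tv_dist_kernel_contraction[where lam=lam] lam doob_transform_stochastic Qpos w)
      (auto simp: is_prob_def)
qed

lemma tv_dist_filter_step_perturbation:
  assumes mu: "\<And>x. 0 < mu x" and w: "\<And>x. 0 < w x"
    and Q: "\<And>y x. 0 < Q y x" and Q': "\<And>y x. 0 < Q' y x"
    and close: "\<And>y x. \<bar>Q' y x - Q y x\<bar> \<le> r * Q y x"
  shows "tv_dist (otimes (filter_step Q mu) w) (otimes (filter_step Q' mu) w) \<le> r"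
proof -
  have weights: "0 < (\<Sum>y\<in>UNIV. mu y * Q y x) * w x" "0 < (\<Sum>y\<in>UNIV. mu y * Q' y x) * w x" for x
    by (intro mult_pos_pos sum_pos_UNIV mu Q Q' w)+
  have mass: "(\<Sum>x\<in>UNIV. \<Sum>y\<in>UNIV. mu y * Q y x) \<noteq> 0" "(\<Sum>x\<in>UNIV. \<Sum>y\<in>UNIV. mu y * Q' y x) \<noteq> 0"
    by (intro less_imp_neq[symmetric] sum_pos_UNIV mult_pos_pos mu Q Q')+
  have close_weights: "\<bar>(\<Sum>y\<in>UNIV. mu y * Q' y x) * w x - (\<Sum>y\<in>UNIV. mu y * Q y x) * w x\<bar>
      \<le> r * ((\<Sum>y\<in>UNIV. mu y * Q y x) * w x)" for x
  proof -
    have "\<bar>(\<Sum>y\<in>UNIV. mu y * Q' y x) * w x - (\<Sum>y\<in>UNIV. mu y * Q y x) * w x\<bar>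
        = \<bar>\<Sum>y\<in>UNIV. mu y * (Q' y x - Q y x)\<bar> * w x"
      using w[of x] by (simp add: sum_subtractf right_diff_distrib left_diff_distrib[symmetric] abs_mult)
    also have "\<dots> \<le> (\<Sum>y\<in>UNIV. mu y * (r * Q y x)) * w x"
      using mu close w[of x]
      by (intro mult_right_mono order_trans[OF sum_abs] sum_mono)
        (auto simp: abs_mult less_imp_le intro: mult_left_mono)
    also have "\<dots> = r * ((\<Sum>y\<in>UNIV. mu y * Q y x) * w x)"
      by (simp add: sum_distrib_left algebra_simps)
    finally show ?thesis .
  qed
  then show ?thesis
    unfolding otimes_filter_step[OF mass(1)] otimes_filter_step[OF mass(2)]
    by (intro tv_dist_normalize_le weights close_weights)
qed

lemma tv_dist_otimes_filter_step_le:
  assumes Q: "doeblin_bounds c1 c2 Q" and c1: "0 < c1"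
    and Q': "\<And>y x. 0 < Q' y x" and close: "\<And>y x. \<bar>Q' y x - Q y x\<bar> \<le> r * Q y x"
    and mu: "\<And>x. 0 < mu x" and nu: "\<And>x. 0 < nu x" and w: "\<And>x. 0 < w x"
  shows "tv_dist (otimes (filter_step Q mu) w) (otimes (filter_step Q' nu) w)
    \<le> (1 - c1 / c2) * tv_dist (otimes mu (kernel_apply Q w)) (otimes nu (kernel_apply Q w)) + r"
proof -
  have Qpos: "0 < Q y x" for y x
    using Q c1 by (rule doeblin_bounds_pos)
  have "tv_dist (otimes (filter_step Q mu) w) (otimes (filter_step Q nu) w)
      \<le> (1 - c1 / c2) * tv_dist (otimes mu (kernel_apply Q w)) (otimes nu (kernel_apply Q w))"
    using Q c1 mu nu w by (rule tv_dist_filter_step_contraction)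
  moreover have "tv_dist (otimes (filter_step Q nu) w) (otimes (filter_step Q' nu) w) \<le> r"
    using nu w Qpos Q' close by (rule tv_dist_filter_step_perturbation)
  ultimately show ?thesis
    using tv_dist_triangle[of "otimes (filter_step Q mu) w" "otimes (filter_step Q' nu) w"
        "otimes (filter_step Q nu) w"]
    by linarith
qed

text \<open>The perturbation r injected at every step is damped geometrically and accumulates to at
  most r * \<Sum>k. (1 - c1/c2)^k = r * c2/c1.  The induction has to range over all weights w,
  because each contraction step replaces w by its backward-propagated version.\<close>

lemma tv_dist_otimes_filter_chain:
  fixes Q Q' :: "int \<Rightarrow> 'x::finite \<Rightarrow> 'x \<Rightarrow> real" and p p' :: "int \<Rightarrow> 'x \<Rightarrow> real"
  assumes "m \<le> n"
    and p: "\<And>t x. m \<le> t \<Longrightarrow> t \<le> n \<Longrightarrow> 0 < p t x"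
    and p': "\<And>t x. m \<le> t \<Longrightarrow> t \<le> n \<Longrightarrow> 0 < p' t x"
    and forward: "\<And>t. m < t \<Longrightarrow> t \<le> n \<Longrightarrow> p t = filter_step (Q t) (p (t - 1))"
    and forward': "\<And>t. m < t \<Longrightarrow> t \<le> n \<Longrightarrow> p' t = filter_step (Q' t) (p' (t - 1))"
    and doeblin: "\<And>t. m < t \<Longrightarrow> t \<le> n \<Longrightarrow> doeblin_bounds c1 c2 (Q t)"
    and Q': "\<And>t y x. m < t \<Longrightarrow> t \<le> n \<Longrightarrow> 0 < Q' t y x"
    and close: "\<And>t y x. m < t \<Longrightarrow> t \<le> n \<Longrightarrow> \<bar>Q' t y x - Q t y x\<bar> \<le> r * Q t y x"
    and c1: "0 < c1" and c12: "c1 \<le> c2" and r: "0 \<le> r" and w: "\<And>x. 0 < w x"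
  shows "tv_dist (otimes (p n) w) (otimes (p' n) w) \<le> (1 - c1 / c2) ^ nat (n - m) + r * (c2 / c1)"
proof -
  define d where "d = 1 - c1 / c2"
  have d: "0 \<le> d" and accumulate: "d * (c2 / c1) + 1 = c2 / c1"
    using c1 c12 by (simp_all add: d_def field_simps)
  have "tv_dist (otimes (p t) w) (otimes (p' t) w) \<le> d ^ nat (t - m) + r * (c2 / c1)"
    if "m \<le> t" "t \<le> n" "\<And>x. 0 < w x" for t w
    using that
  proof (induction t arbitrary: w rule: int_ge_induct[consumes 1])
    case base
    have "tv_dist (otimes (p m) w) (otimes (p' m) w) \<le> 1"
      using base p p' \<open>m \<le> n\<close> by (intro tv_dist_le_one is_prob_otimes) auto
    moreover have "0 \<le> r * (c2 / c1)"
      using r c1 c12 by simp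
    ultimately show ?case
      by simp
  next
    case (step t)
    let ?Q = "Q (t + 1)" and ?Q' = "Q' (t + 1)"
    have Q: "doeblin_bounds c1 c2 ?Q"
      using step.hyps step.prems by (intro doeblin) auto
    have w': "0 < kernel_apply ?Q w y" for y
      by (intro kernel_apply_pos doeblin_bounds_pos[OF Q c1] step.prems(2))
    have succ: "nat (t + 1 - m) = Suc (nat (t - m))"
      using step.hyps by simp
    have "tv_dist (otimes (p (t + 1)) w) (otimes (p' (t + 1)) w)
        = tv_dist (otimes (filter_step ?Q (p t)) w) (otimes (filter_step ?Q' (p' t)) w)"
      using step.hyps step.prems by (simp add: forward forward')
    also have "\<dots> \<le> d * tv_dist (otimes (p t) (kernel_apply ?Q w)) (otimes (p' t) (kernel_apply ?Q w)) + r"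
      unfolding d_def using step.hyps step.prems
      by (intro tv_dist_otimes_filter_step_le Q c1 Q' close p p') auto
    also have "\<dots> \<le> d * (d ^ nat (t - m) + r * (c2 / c1)) + r"
      using step.IH[OF _ w'] step.prems d by (intro add_right_mono mult_left_mono) auto
    also have "\<dots> = d ^ nat (t + 1 - m) + r * (d * (c2 / c1) + 1)"
      unfolding succ by (simp add: algebra_simps)
    also have "\<dots> = d ^ nat (t + 1 - m) + r * (c2 / c1)"
      unfolding accumulate ..
    finally show ?case .
  qed
  then show ?thesis
    using \<open>m \<le> n\<close> w unfolding d_def by blast
qed

section \<open>Lipschitz bounds for continuously differentiable functions\<close>

lemma C1_on_const: "C1_on T (\<lambda>x. c)"
  unfolding C1_on_def
  by (rule exI[of _ "\<lambda>_. 0"]) (simp add: zero_blinfun.rep_eq)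

lemma C1_on_mult:
  assumes "C1_on T f" "C1_on T g"
  shows "C1_on T (\<lambda>x. f x * g x)"
proof -
  obtain Df where Df: "\<And>x. x \<in> T \<Longrightarrow> (f has_derivative blinfun_apply (Df x)) (at x)" "continuous_on T Df"
    using assms(1) unfolding C1_on_def by blast
  obtain Dg where Dg: "\<And>x. x \<in> T \<Longrightarrow> (g has_derivative blinfun_apply (Dg x)) (at x)" "continuous_on T Dg"
    using assms(2) unfolding C1_on_def by blast
  have "continuous_on T f" "continuous_on T g"
    using Df(1) Dg(1) by (auto intro!: continuous_at_imp_continuous_on has_derivative_continuous)
  show ?thesis
    unfolding C1_on_def
  proof (intro exI conjI ballI)
    show "continuous_on T (\<lambda>x. f x *\<^sub>R Dg x + g x *\<^sub>R Df x)"
      using \<open>continuous_on T f\<close> \<open>continuous_on T g\<close> Df(2) Dg(2) by (intro continuous_intros)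
    show "((\<lambda>x. f x * g x) has_derivative blinfun_apply (f x *\<^sub>R Dg x + g x *\<^sub>R Df x)) (at x)"
      if "x \<in> T" for x
      using has_derivative_mult[OF Df(1)[OF that] Dg(1)[OF that]]
      by (rule has_derivative_eq_rhs) (simp add: fun_eq_iff plus_blinfun.rep_eq scaleR_blinfun.rep_eq)
  qed
qed

lemma C1_on_lipschitz_on:
  assumes f: "C1_on T f" and K: "K \<subseteq> T" "compact K" "convex K"
  obtains L where "L-lipschitz_on K f"
proof -
  obtain D where D: "\<And>x. x \<in> T \<Longrightarrow> (f has_derivative blinfun_apply (D x)) (at x)" "continuous_on T D"
    using f unfolding C1_on_def by blast
  have "bounded (D ` K)"
    using K by (intro compact_imp_bounded compact_continuous_image continuous_on_subset[OF D(2)])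
  then obtain B where B: "0 < B" "\<And>x. x \<in> K \<Longrightarrow> norm (D x) \<le> B"
    unfolding bounded_pos by blast
  have "B-lipschitz_on K f"
    using K B D(1)
    by (intro bounded_derivative_imp_lipschitz[where f' = "\<lambda>x. blinfun_apply (D x)"])
      (auto intro: has_derivative_at_withinI simp: norm_blinfun.rep_eq[symmetric])
  then show ?thesis ..
qed

lemma lipschitz_on_finite_family:
  fixes f :: "'i::finite \<Rightarrow> 'a::metric_space \<Rightarrow> 'b::metric_space"
  assumes "\<And>i. \<exists>L. L-lipschitz_on K (f i)"
  obtains C where "\<And>i. C-lipschitz_on K (f i)"
proof -
  obtain M where M: "\<And>i. (M i)-lipschitz_on K (f i)"
    using assms by metis
  have "(Max (range M))-lipschitz_on K (f i)" for i
    using M by (rule lipschitz_on_mono) simp_all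
  then show ?thesis ..
qed

lemma dist_le_Inf_lipschitz_constants:
  fixes f :: "'i \<Rightarrow> 'a::metric_space \<Rightarrow> 'b::metric_space"
  assumes "\<exists>L. \<forall>i. L-lipschitz_on S (f i)" "x \<in> S" "y \<in> S"
  shows "dist (f i x) (f i y) \<le> Inf {L. \<forall>i. L-lipschitz_on S (f i)} * dist x y"
proof (cases "x = y")
  case False
  then have xy: "0 < dist x y"
    by simp
  have "dist (f i x) (f i y) / dist x y \<le> Inf {L. \<forall>i. L-lipschitz_on S (f i)}"
    using assms xy by (intro cInf_greatest) (auto dest: lipschitz_onD simp: pos_divide_le_eq)
  then show ?thesis
    using xy by (simp add: pos_divide_le_eq)
qed simp

section \<open>The transition kernel of the option model\<close>

definition hkernel ::
  "('o::finite \<Rightarrow> 's \<Rightarrow> 'h \<Rightarrow> real) \<Rightarrow> ('a \<Rightarrow> 's \<Rightarrow> 'o \<Rightarrow> 'l \<Rightarrow> real) \<Rightarrow>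
   (bool \<Rightarrow> 's \<Rightarrow> 'o \<Rightarrow> 'b \<Rightarrow> real) \<Rightarrow> real \<Rightarrow> ('h,'l,'b) param \<Rightarrow> 's \<Rightarrow> 'a \<Rightarrow>
   'o \<times> bool \<Rightarrow> 'o \<times> bool \<Rightarrow> real" where
  "hkernel pihi pilo pib zeta th st ac =
     (\<lambda>y x. hfun pihi pilo pib zeta th (fst y) st ac (fst x) (snd x))"

lemma fwd_eq_filter_step:
  "fwd pihi pilo pib zeta s a th t phi = filter_step (hkernel pihi pilo pib zeta th (s t) (a t)) phi"
  unfolding fwd_def filter_step_def hkernel_def
  by (rule arg_cong[where f = normalize]) (auto simp: split_beta mult.commute intro!: sum.cong)

lemma bwd_eq_filter_step:
  "bwd pihi pilo pib zeta s a th t rho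
    = filter_step (\<lambda>x y. hkernel pihi pilo pib zeta th (s (t + 1)) (a (t + 1)) y x) rho"
  unfolding bwd_def filter_step_def hkernel_def
  by (rule arg_cong[where f = normalize]) (auto simp: split_beta mult.commute intro!: sum.cong)

text \<open>The minorization of pi_b * pibar_hi by a positive function m on O x {0,1} turns into Doeblin
  bounds for the transition kernel with u = 1 and v (o, b) = m (o, b) * pi_lo (a | s, o).\<close>

lemma hkernel_doeblin_bounds:
  fixes pihi :: "'o::finite \<Rightarrow> 's \<Rightarrow> 'h \<Rightarrow> real"
  assumes c1: "0 < c1"
    and m: "\<And>oprev ot bt. 0 < c1 * m (ot, bt)
      \<and> c1 * m (ot, bt) \<le> pib bt st oprev (snd (snd p)) * pibar_hi pihi zeta ot st oprev bt (fst p)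
      \<and> pib bt st oprev (snd (snd p)) * pibar_hi pihi zeta ot st oprev bt (fst p) \<le> c2 * m (ot, bt)"
    and pilo: "\<And>ot. 0 < pilo ac st ot (fst (snd p))"
  shows "doeblin_bounds c1 c2 (hkernel pihi pilo pib zeta p st ac)"
  unfolding doeblin_bounds_def
proof (intro exI conjI allI)
  let ?v = "\<lambda>x. m x * pilo ac st (fst x) (fst (snd p))"
  fix y x :: "'o \<times> bool"
  obtain oprev bprev ot bt where yx: "y = (oprev, bprev)" "x = (ot, bt)"
    by fastforce
  define A where "A = pib bt st oprev (snd (snd p)) * pibar_hi pihi zeta ot st oprev bt (fst p)"
  have "hkernel pihi pilo pib zeta p st ac y x = A * pilo ac st ot (fst (snd p))"
    unfolding hkernel_def hfun_def A_def yx by simp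
  then show "c1 * 1 * ?v x \<le> hkernel pihi pilo pib zeta p st ac y x"
    "hkernel pihi pilo pib zeta p st ac y x \<le> c2 * 1 * ?v x"
    using m[where oprev = oprev and ot = ot and bt = bt] pilo[of ot] unfolding A_def yx
    by (simp_all add: mult.assoc[symmetric] mult_right_mono)
  show "0 < ?v x"
    using m[where oprev = undefined and ot = "fst x" and bt = "snd x"] pilo[of "fst x"] c1 by (simp add: zero_less_mult_iff)
qed simp

lemma hfun_lipschitz_on:
  fixes pihi :: "'o::finite \<Rightarrow> 's::finite \<Rightarrow> 'h::euclidean_space \<Rightarrow> real"
    and pilo :: "'a::finite \<Rightarrow> 's \<Rightarrow> 'o \<Rightarrow> 'l::euclidean_space \<Rightarrow> real"
    and pib :: "bool \<Rightarrow> 's \<Rightarrow> 'o \<Rightarrow> 'b::euclidean_space \<Rightarrow> real"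
    and Theta :: "('h,'l,'b) param set"
  assumes Theta: "Theta \<subseteq> T" "compact Theta" "convex Theta"
    and C1h: "\<forall>ov st. C1_on T (\<lambda>p. pihi ov st (fst p))"
    and C1l: "\<forall>ac st ov. C1_on T (\<lambda>p. pilo ac st ov (fst (snd p)))"
    and C1b: "\<forall>bt st ov. C1_on T (\<lambda>p. pib bt st ov (snd (snd p)))"
  shows "\<exists>L. \<forall>oprev st ac ot bt. L-lipschitz_on Theta (\<lambda>p. hfun pihi pilo pib zeta p oprev st ac ot bt)"
proof -
  let ?f = "\<lambda>(oprev, st, ac, ot, bt) p. hfun pihi pilo pib zeta p oprev st ac ot bt"
  have "C1_on T (\<lambda>p. pibar_hi pihi zeta ot st oprev bt (fst p))" for ot st oprev bt
    using C1h by (cases bt) (simp_all add: pibar_hi_def C1_on_const)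
  then have "C1_on T (?f i)" for i
    unfolding hfun_def using C1l C1b by (auto intro!: C1_on_mult split: prod.split)
  then have "\<exists>L. L-lipschitz_on Theta (?f i)" for i
    using Theta by (metis C1_on_lipschitz_on)
  then obtain L where "L-lipschitz_on Theta (?f i)" for i
    using lipschitz_on_finite_family[where K = Theta and f = ?f] by blast
  then show ?thesis
    by (metis case_prod_conv)
qed

lemma hmin_le_hfun: "hmin pihi pilo pib zeta th st ac \<le> hfun pihi pilo pib zeta th oprev st ac ot bt"
  for pihi :: "'o::finite \<Rightarrow> 's \<Rightarrow> 'h \<Rightarrow> real"
  unfolding hmin_def by (rule Min_le) (auto intro: image_eqI[where x = "(oprev, ot, bt)"])

lemma hfun_le_hmax: "hfun pihi pilo pib zeta th oprev st ac ot bt \<le> hmax pihi pilo pib zeta th st ac"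
  for pihi :: "'o::finite \<Rightarrow> 's \<Rightarrow> 'h \<Rightarrow> real"
  unfolding hmax_def by (rule Max_ge) (auto intro: image_eqI[where x = "(oprev, ot, bt)"])

lemma hmin_pos:
  fixes pihi :: "'o::finite \<Rightarrow> 's \<Rightarrow> 'h \<Rightarrow> real"
  assumes "\<And>oprev ot bt. 0 < hfun pihi pilo pib zeta th oprev st ac ot bt"
  shows "0 < hmin pihi pilo pib zeta th st ac"
proof -
  let ?A = "range (\<lambda>(oprev, ot, bt). hfun pihi pilo pib zeta th oprev st ac ot bt)"
  have "Min ?A \<in> ?A"
    by (rule Min_in) auto
  then show ?thesis
    unfolding hmin_def using assms by auto
qed

lemma inverse_hmin_le_zconst:
  fixes pihi :: "'o::finite \<Rightarrow> 's::finite \<Rightarrow> 'h \<Rightarrow> real"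
    and pilo :: "'a::finite \<Rightarrow> 's \<Rightarrow> 'o \<Rightarrow> 'l \<Rightarrow> real"
  assumes "\<And>oprev ot bt. 0 < hfun pihi pilo pib zeta th oprev st ac ot bt"
    and "\<And>oprev ot bt. 0 < hfun pihi pilo pib zeta th' oprev st ac ot bt"
  shows "1 / hmin pihi pilo pib zeta th st ac \<le> zconst pihi pilo pib zeta th th'"
proof -
  let ?m = "hmin pihi pilo pib zeta th st ac" and ?m' = "hmin pihi pilo pib zeta th' st ac"
  let ?M = "max (hmax pihi pilo pib zeta th st ac) (hmax pihi pilo pib zeta th' st ac)"
  have m: "0 < ?m" "0 < ?m'"
    using assms by (simp_all add: hmin_pos)
  have "?m' \<le> ?M"
    using hmin_le_hfun[of pihi pilo pib zeta th' st ac] hfun_le_hmax[of pihi pilo pib zeta th']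
    by (meson max.coboundedI2 order_trans)
  then have "1 / ?m \<le> ?M / (?m * ?m')"
    using m by (simp add: divide_simps)
  also have "\<dots> \<le> zconst pihi pilo pib zeta th th'"
    unfolding zconst_def by (rule Max_ge) (auto intro: image_eqI[where x = "(st, ac)"])
  finally show ?thesis .
qed

lemma abs_diff_le_relative:
  fixes a a' K m z :: real
  assumes "\<bar>a' - a\<bar> \<le> K" "0 < m" "m \<le> a" "1 / m \<le> z"
  shows "\<bar>a' - a\<bar> \<le> z * K * a"
proof -
  have "1 \<le> z * m"
    using assms(2,4) by (simp add: divide_le_eq mult.commute)
  also have "\<dots> \<le> z * a"
    using assms(2-4) by (intro mult_left_mono) (auto intro: order_trans[rotated])
  finally have "K \<le> K * (z * a)"
    using assms(1) by (simp add: mult_le_cancel_left1 order_trans[OF abs_ge_zero])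
  with assms(1) show ?thesis
    by (simp add: algebra_simps)
qed

text \<open>Lconst is an infimum, so it bounds differences of h only once some Lipschitz constant
  exists; hfun_lipschitz_on provides one.\<close>

lemma hkernel_relative_perturbation:
  fixes pihi :: "'o::finite \<Rightarrow> 's::finite \<Rightarrow> 'h::euclidean_space \<Rightarrow> real"
    and pilo :: "'a::finite \<Rightarrow> 's \<Rightarrow> 'o \<Rightarrow> 'l::euclidean_space \<Rightarrow> real"
    and pib :: "bool \<Rightarrow> 's \<Rightarrow> 'o \<Rightarrow> 'b::euclidean_space \<Rightarrow> real"
  assumes lip: "\<exists>L. \<forall>oprev st ac ot bt.
      L-lipschitz_on Theta (\<lambda>p. hfun pihi pilo pib zeta p oprev st ac ot bt)"
    and th: "th \<in> Theta" and th': "th' \<in> Theta"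
    and pos: "\<And>st ac y x. 0 < hkernel pihi pilo pib zeta th st ac y x"
      "\<And>st ac y x. 0 < hkernel pihi pilo pib zeta th' st ac y x"
  shows "\<bar>hkernel pihi pilo pib zeta th' st ac y x - hkernel pihi pilo pib zeta th st ac y x\<bar>
    \<le> zconst pihi pilo pib zeta th th' * Lconst pihi pilo pib zeta Theta th (norm (th' - th))
      * norm (th' - th) * hkernel pihi pilo pib zeta th st ac y x"
proof -
  define S where "S = {p \<in> Theta. norm (p - th) \<le> norm (th' - th)}"
  let ?f = "\<lambda>(oprev, st, ac, ot, bt) p. hfun pihi pilo pib zeta p oprev st ac ot bt"
  have "\<exists>L. \<forall>i. L-lipschitz_on S (?f i)"
    using lip unfolding S_def by (force intro: lipschitz_on_subset)
  moreover have "th' \<in> S" "th \<in> S"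
    using th th' unfolding S_def by auto
  ultimately have "dist (?f i th') (?f i th) \<le> Inf {L. \<forall>i. L-lipschitz_on S (?f i)} * dist th' th" for i
    by (rule dist_le_Inf_lipschitz_constants)
  from this[of "(fst y, st, ac, fst x, snd x)"]
  have lipschitz: "\<bar>hfun pihi pilo pib zeta th' (fst y) st ac (fst x) (snd x)
      - hfun pihi pilo pib zeta th (fst y) st ac (fst x) (snd x)\<bar>
      \<le> Lconst pihi pilo pib zeta Theta th (norm (th' - th)) * norm (th' - th)"
    unfolding Lconst_def S_def by (simp add: dist_real_def dist_norm split_beta)
  have hfun_pos: "0 < hfun pihi pilo pib zeta p oprev st ac ot bt"
    if "p = th \<or> p = th'" for p oprev ot bt
    using that pos[of st ac "(oprev, undefined)" "(ot, bt)"] by (auto simp: hkernel_def)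
  have "\<bar>hfun pihi pilo pib zeta th' (fst y) st ac (fst x) (snd x)
      - hfun pihi pilo pib zeta th (fst y) st ac (fst x) (snd x)\<bar>
    \<le> zconst pihi pilo pib zeta th th' * (Lconst pihi pilo pib zeta Theta th (norm (th' - th))
      * norm (th' - th)) * hfun pihi pilo pib zeta th (fst y) st ac (fst x) (snd x)"
  proof (rule abs_diff_le_relative[OF lipschitz])
    show "0 < hmin pihi pilo pib zeta th st ac"
      using hfun_pos by (intro hmin_pos) auto
    show "1 / hmin pihi pilo pib zeta th st ac \<le> zconst pihi pilo pib zeta th th'"
      using hfun_pos by (intro inverse_hmin_le_zconst) auto
  qed (rule hmin_le_hfun)
  then show ?thesis
    unfolding hkernel_def by (simp add: mult.assoc)
qed

section \<open>Forward and backward filters\<close>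

lemma forward_filters_tv_dist:
  fixes pihi :: "'o::finite \<Rightarrow> 's \<Rightarrow> 'h \<Rightarrow> real"
  assumes "t1 \<le> t2"
    and "\<forall>t\<in>{t1..t2}. pos_prob (phi t)" "\<forall>t\<in>{t1..t2}. pos_prob (phi' t)"
    and "\<forall>t\<in>{t1<..t2}. fwd pihi pilo pib zeta s a th t (phi (t - 1)) = phi t"
    and "\<forall>t\<in>{t1<..t2}. fwd pihi pilo pib zeta s a th' t (phi' (t - 1)) = phi' t"
    and "\<And>st ac. doeblin_bounds c1 c2 (hkernel pihi pilo pib zeta th st ac)"
    and "\<And>st ac y x. 0 < hkernel pihi pilo pib zeta th' st ac y x"
    and "\<And>st ac y x. \<bar>hkernel pihi pilo pib zeta th' st ac y x - hkernel pihi pilo pib zeta th st ac y x\<bar>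
      \<le> r * hkernel pihi pilo pib zeta th st ac y x"
    and "0 < c1" "c1 \<le> c2" "0 \<le> r" "\<And>x. 0 < w x"
  shows "tv_dist (otimes (phi t2) w) (otimes (phi' t2) w)
    \<le> (1 - c1 / c2) ^ nat (t2 - t1) + r * (c2 / c1)"
  using assms
  by (intro tv_dist_otimes_filter_chain[where Q = "\<lambda>t. hkernel pihi pilo pib zeta th (s t) (a t)"
        and Q' = "\<lambda>t. hkernel pihi pilo pib zeta th' (s t) (a t)"])
    (auto simp: pos_prob_def fwd_eq_filter_step)

text \<open>The backward recursion is a forward recursion in reversed time, with transposed kernels.\<close>

lemma backward_filters_tv_dist:
  fixes pihi :: "'o::finite \<Rightarrow> 's \<Rightarrow> 'h \<Rightarrow> real"
  assumes "t1 \<le> t2"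
    and "\<forall>t\<in>{t1..t2}. pos_prob (rho t)" "\<forall>t\<in>{t1..t2}. pos_prob (rho' t)"
    and "\<forall>t\<in>{t1..<t2}. bwd pihi pilo pib zeta s a th t (rho (t + 1)) = rho t"
    and "\<forall>t\<in>{t1..<t2}. bwd pihi pilo pib zeta s a th' t (rho' (t + 1)) = rho' t"
    and "\<And>st ac. doeblin_bounds c1 c2 (hkernel pihi pilo pib zeta th st ac)"
    and "\<And>st ac y x. 0 < hkernel pihi pilo pib zeta th' st ac y x"
    and "\<And>st ac y x. \<bar>hkernel pihi pilo pib zeta th' st ac y x - hkernel pihi pilo pib zeta th st ac y x\<bar>
      \<le> r * hkernel pihi pilo pib zeta th st ac y x"
    and "0 < c1" "c1 \<le> c2" "0 \<le> r" "\<And>x. 0 < w x"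
  shows "tv_dist (otimes w (rho t1)) (otimes w (rho' t1))
    \<le> (1 - c1 / c2) ^ nat (t2 - t1) + r * (c2 / c1)"
proof -
  have "rho (- u) = filter_step (\<lambda>x y. hkernel pihi pilo pib zeta th (s (1 - u)) (a (1 - u)) y x) (rho (1 - u))"
    "rho' (- u) = filter_step (\<lambda>x y. hkernel pihi pilo pib zeta th' (s (1 - u)) (a (1 - u)) y x) (rho' (1 - u))"
    if "- t2 < u" "u \<le> - t1" for u
    using assms(4,5)[rule_format, of "- u"] that by (simp_all add: bwd_eq_filter_step)
  then have "tv_dist (otimes (rho (- (- t1))) w) (otimes (rho' (- (- t1))) w)
      \<le> (1 - c1 / c2) ^ nat (- t1 - - t2) + r * (c2 / c1)"
    using assms
    by (intro tv_dist_otimes_filter_chain[where p = "\<lambda>u. rho (- u)" and p' = "\<lambda>u. rho' (- u)"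
          and Q = "\<lambda>u x y. hkernel pihi pilo pib zeta th (s (1 - u)) (a (1 - u)) y x"
          and Q' = "\<lambda>u x y. hkernel pihi pilo pib zeta th' (s (1 - u)) (a (1 - u)) y x"])
      (auto simp: pos_prob_def bwd_eq_filter_step intro: doeblin_bounds_transpose)
  then show ?thesis
    by (simp add: otimes_commute)
qed

theorem lemma11:
  fixes pihi :: "'o::finite \<Rightarrow> 's::finite \<Rightarrow> 'h::euclidean_space \<Rightarrow> real"
    and pilo :: "'a::finite \<Rightarrow> 's \<Rightarrow> 'o \<Rightarrow> 'l::euclidean_space \<Rightarrow> real"
    and pib :: "bool \<Rightarrow> 's \<Rightarrow> 'o \<Rightarrow> 'b::euclidean_space \<Rightarrow> real"
    and Theta_hi :: "'h set" and Theta_lo :: "'l set" and Theta_b :: "'b set"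
    and Theta :: "('h,'l,'b) param set"
    and zeta eps_b :: real
    and s :: "int \<Rightarrow> 's" and a :: "int \<Rightarrow> 'a"
    and t1 t2 :: int
    and th th' :: "('h,'l,'b) param"
    and phi phi' rho rho' :: "int \<Rightarrow> ('o \<times> bool \<Rightarrow> real)"
  assumes Theta_def: "Theta = Theta_hi \<times> Theta_lo \<times> Theta_b"
    and Theta_convex: "convex Theta" and Theta_compact: "compact Theta"
    and standing: "\<exists>T. open T \<and> Theta \<subseteq> T \<and>
        (\<forall>p\<in>T. (\<forall>ov st. 0 < pihi ov st (fst p)) \<and> (\<forall>st. (\<Sum>ov\<in>UNIV. pihi ov st (fst p)) = 1)
             \<and> (\<forall>ac st ov. 0 < pilo ac st ov (fst (snd p)))
             \<and> (\<forall>st ov. (\<Sum>ac\<in>UNIV. pilo ac st ov (fst (snd p))) = 1)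
             \<and> (\<forall>bt st ov. 0 < pib bt st ov (snd (snd p)))
             \<and> (\<forall>st ov. pib True st ov (snd (snd p)) + pib False st ov (snd (snd p)) = 1))
        \<and> (\<forall>ov st. C1_on T (\<lambda>p. pihi ov st (fst p)))
        \<and> (\<forall>ac st ov. C1_on T (\<lambda>p. pilo ac st ov (fst (snd p))))
        \<and> (\<forall>bt st ov. C1_on T (\<lambda>p. pib bt st ov (snd (snd p))))"
    and zeta: "0 < zeta" "zeta < 1"
    and eps_pos: "0 < eps_b"
    and eps_b: "\<exists>pibar :: 'o \<times> bool \<Rightarrow> 's \<Rightarrow> ('h,'l,'b) param \<Rightarrow> real.
        (\<forall>p\<in>Theta. \<forall>st. is_prob (\<lambda>x. pibar x st p)) \<and>
        (\<forall>p\<in>Theta. \<forall>oprev st ot bt.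
           0 < eps_b * zeta * pibar (ot, bt) st p \<and>
           eps_b * zeta * pibar (ot, bt) st p
             \<le> pib bt st oprev (snd (snd p)) * pibar_hi pihi zeta ot st oprev bt (fst p) \<and>
           pib bt st oprev (snd (snd p)) * pibar_hi pihi zeta ot st oprev bt (fst p)
             \<le> inverse eps_b * real CARD('o) * pibar (ot, bt) st p)"
    and t12: "t1 \<le> t2"
    and th_in: "th \<in> Theta" and th'_in: "th' \<in> Theta"
    and phi_pos: "\<forall>t\<in>{t1..t2}. pos_prob (phi t)"
    and phi'_pos: "\<forall>t\<in>{t1..t2}. pos_prob (phi' t)"
    and rho_pos: "\<forall>t\<in>{t1..t2}. pos_prob (rho t)"
    and rho'_pos: "\<forall>t\<in>{t1..t2}. pos_prob (rho' t)"
    and phi_fwd: "\<forall>t\<in>{t1<..t2}. fwd pihi pilo pib zeta s a th t (phi (t - 1)) = phi t"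
    and phi'_fwd: "\<forall>t\<in>{t1<..t2}. fwd pihi pilo pib zeta s a th' t (phi' (t - 1)) = phi' t"
    and rho_bwd: "\<forall>t\<in>{t1..<t2}. bwd pihi pilo pib zeta s a th t (rho (t + 1)) = rho t"
    and rho'_bwd: "\<forall>t\<in>{t1..<t2}. bwd pihi pilo pib zeta s a th' t (rho' (t + 1)) = rho' t"
  shows "tv_dist (otimes (phi t2) (rho t2)) (otimes (phi' t2) (rho t2))
           \<le> (1 - eps_b\<^sup>2 * zeta / real CARD('o)) ^ nat (t2 - t1)
             + real CARD('o) * zconst pihi pilo pib zeta th th'
                 * Lconst pihi pilo pib zeta Theta th (norm (th' - th))
                 / (eps_b\<^sup>2 * zeta) * norm (th' - th)
       \<and> tv_dist (otimes (phi' t1) (rho t1)) (otimes (phi' t1) (rho' t1))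
           \<le> (1 - eps_b\<^sup>2 * zeta / real CARD('o)) ^ nat (t2 - t1)
             + real CARD('o) * zconst pihi pilo pib zeta th th'
                 * Lconst pihi pilo pib zeta Theta th (norm (th' - th))
                 / (eps_b\<^sup>2 * zeta) * norm (th' - th)"
proof -
  obtain pibar where pibar: "\<forall>p\<in>Theta. \<forall>oprev st ot bt.
      0 < eps_b * zeta * pibar (ot, bt) st p \<and>
      eps_b * zeta * pibar (ot, bt) st p
        \<le> pib bt st oprev (snd (snd p)) * pibar_hi pihi zeta ot st oprev bt (fst p) \<and>
      pib bt st oprev (snd (snd p)) * pibar_hi pihi zeta ot st oprev bt (fst p)
        \<le> inverse eps_b * real CARD('o) * pibar (ot, bt) st p"
    using eps_b by blast
  have pilo_pos: "\<forall>p\<in>Theta. \<forall>ac st ov. 0 < pilo ac st ov (fst (snd p))"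
    using standing by (elim exE conjE) (meson subsetD)
  have lipschitz: "\<exists>L. \<forall>oprev st ac ot bt.
      L-lipschitz_on Theta (\<lambda>p. hfun pihi pilo pib zeta p oprev st ac ot bt)"
    using standing Theta_compact Theta_convex by (elim exE conjE) (rule hfun_lipschitz_on)
  define c1 c2 where "c1 = eps_b * zeta" and "c2 = inverse eps_b * real CARD('o)"
  define r where "r = zconst pihi pilo pib zeta th th'
    * Lconst pihi pilo pib zeta Theta th (norm (th' - th)) * norm (th' - th)"
  have c1: "0 < c1"
    using eps_pos zeta by (simp add: c1_def)
  have doeblin: "doeblin_bounds c1 c2 (hkernel pihi pilo pib zeta p st ac)" if "p \<in> Theta" for p st ac
    using that pilo_pos pibar c1 unfolding c1_def c2_def
    by (intro hkernel_doeblin_bounds[where m = "\<lambda>x. pibar x st p"]) auto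
  have hpos: "0 < hkernel pihi pilo pib zeta p st ac y x" if "p \<in> Theta" for p st ac y x
    using doeblin[OF that] c1 by (rule doeblin_bounds_pos)
  have close: "\<bar>hkernel pihi pilo pib zeta th' st ac y x - hkernel pihi pilo pib zeta th st ac y x\<bar>
      \<le> r * hkernel pihi pilo pib zeta th st ac y x" for st ac y x
    unfolding r_def using lipschitz th_in th'_in hpos[OF th_in] hpos[OF th'_in]
    by (rule hkernel_relative_perturbation)
  have r: "0 \<le> r"
    using order_trans[OF abs_ge_zero close] hpos[OF th_in] by (meson zero_le_mult_iff not_le)
  have c12: "c1 \<le> c2"
    using doeblin[OF th_in] by (rule doeblin_bounds_le)
  have rate: "c1 / c2 = eps_b\<^sup>2 * zeta / real CARD('o)"
    and bias: "r * (c2 / c1) = real CARD('o) * zconst pihi pilo pib zeta th th'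
      * Lconst pihi pilo pib zeta Theta th (norm (th' - th)) / (eps_b\<^sup>2 * zeta) * norm (th' - th)"
    using eps_pos zeta by (simp_all add: c1_def c2_def r_def field_simps power2_eq_square)
  have "tv_dist (otimes (phi t2) (rho t2)) (otimes (phi' t2) (rho t2))
      \<le> (1 - c1 / c2) ^ nat (t2 - t1) + r * (c2 / c1)"
    using t12 phi_pos phi'_pos phi_fwd phi'_fwd doeblin[OF th_in] hpos[OF th'_in] close c1 c12 r rho_pos
    by (intro forward_filters_tv_dist) (auto simp: pos_prob_def)
  moreover have "tv_dist (otimes (phi' t1) (rho t1)) (otimes (phi' t1) (rho' t1))
      \<le> (1 - c1 / c2) ^ nat (t2 - t1) + r * (c2 / c1)"
    using t12 rho_pos rho'_pos rho_bwd rho'_bwd doeblin[OF th_in] hpos[OF th'_in] close c1 c12 r phi'_pos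
    by (intro backward_filters_tv_dist) (auto simp: pos_prob_def)
  ultimately show ?thesis
    unfolding rate bias ..
qed

end
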